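(* Let $n\ge1$, let $f:\{0,1\}^n\to\{0,1\}^n$ be a Boolean model, let $J$ be a nonempty subset of $\{1,\dots,n\}$, and let $h$ be a refinement of $f$ on $X=\prod_{j=1}^n\{0,1,\dots,m_j\}$, where $m_j\ge1$ are integers with $m_j>1$ if and only if $j\in J$. Let $x,y\in X$ and suppose there is a trajectory from $x$ to $y$ in the asynchronous state transition graph of $h$. Then for every element $\hat x\in X_{^Jm.p.}$ compatible with $x$ there exists a trajectory $\hat x\to\cdots\to\hat y$ in the state transition graph of the partial $^J$m.p. dynamics of $f$ such that $\hat y$ is compatible with $y$.
   Context: Asynchronous dynamics of $h:X\to X$ (with $h_j(x)-x_j\in\{-1,0,1\}$): transition $x\to y$ if there is $i_0$ with $x_{i_0}\ne h_{i_0}(x)$, $y_{i_0}=x_{i_0}+\mathrm{sign}(h_{i_0}(x)-x_{i_0})$, $y_j=x_j$ for $j\neq i_0$; a trajectory is a finite sequence of consecutive transitions. For $x\in X$, $\alpha(x)=\{x'\in\{0,1\}^n:\forall j,(x_j=0\Rightarrow x'_j=0),(x_j=m_j\Rightarrow x'_j=1)\}$. A multivalued model $h:X\to X$ (with $h_j(x)-x_j\in\{-1,0,1\}$) is a refinement of $f$ if for all $x\in X$ and $j$: $h_j(x)<x_j\Rightarrow\exists x'\in\alpha(x), f_j(x')<x'_j$, and $h_j(x)>x_j\Rightarrow\exists x'\in\alpha(x), f_j(x')>x'_j$. Partial most permissive scheme: $X_{^Jm.p.}=\prod_{j=1}^n\mathcal A_j$ with $\mathcal A_j=\{0,1,i,d\}$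 if $j\in J$ and $\mathcal A_j=\{0,1\}$ otherwise ($i,d$ are formal symbols). For $x\in X_{^Jm.p.}$, $\gamma(x)=\{x'\in\{0,1\}^n:\forall j,(x_j=0\Rightarrow x'_j=0),(x_j=1\Rightarrow x'_j=1)\}$. There is a transition $x\to y$ in $X_{^Jm.p.}$ if there is $j_0$ with $y_j=x_j$ for $j\neq j_0$ and one of: (a) $x_{j_0}\in\{0,d\}$, $\exists x'\in\gamma(x)$ with $f_{j_0}(x')=1$, and $y_{j_0}=i$; (b) $x_{j_0}\in\{1,i\}$, $\exists x'\in\gamma(x)$ with $f_{j_0}(x')=0$, and $y_{j_0}=d$; (c) $x_{j_0}=i$ and $y_{j_0}=1$; (d) $x_{j_0}=d$ and $y_{j_0}=0$; (e) $j_0\notin J$, $x_{j_0}=0$, $\exists x'\in\gamma(x)$ with $f_{j_0}(x')=1$, and $y_{j_0}=1$; (f) $j_0\notin J$, $x_{j_0}=1$, $\exists x'\in\gamma(x)$ with $f_{j_0}(x')=0$, and $y_{j_0}=0$. An element $\hat x\in X_{^Jm.p.}$ is compatible with $x\in X$ if for every $j$: $x_j=0\Rightarrow\hat x_j=0$; $x_j=m_j\Rightarrow\hat x_j=1$; and $x_j\notin\{0,m_j\}\Rightarrow\hat x_j\in\{i,d\}$. *)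

theory Defs
  imports Main
begin

text \<open>Components are indexed by a finite type 'n (so n = CARD('n) \<ge> 1).
 Boolean states: 'n \<Rightarrow> bool (True = 1). Multivalued states: 'n \<Rightarrow> nat.\<close>

definition stateX :: "('n \<Rightarrow> nat) \<Rightarrow> ('n \<Rightarrow> nat) set" where
  "stateX m = {x. \<forall>j. x j \<le> m j}"

definition alpha :: "('n \<Rightarrow> nat) \<Rightarrow> ('n \<Rightarrow> nat) \<Rightarrow> ('n \<Rightarrow> bool) set" where
  "alpha m x = {x'. \<forall>j. (x j = 0 \<longrightarrow> \<not> x' j) \<and> (x j = m j \<longrightarrow> x' j)}"

definition async_trans :: "('n \<Rightarrow> nat) \<Rightarrow> (('n \<Rightarrow> nat) \<Rightarrow> ('n \<Rightarrow> nat))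
    \<Rightarrow> ('n \<Rightarrow> nat) \<Rightarrow> ('n \<Rightarrow> nat) \<Rightarrow> bool" where
  "async_trans m h x y \<longleftrightarrow> x \<in> stateX m \<and>
     (\<exists>i0. x i0 \<noteq> h x i0 \<and>
        y i0 = (if h x i0 > x i0 then x i0 + 1 else x i0 - 1) \<and>
        (\<forall>j. j \<noteq> i0 \<longrightarrow> y j = x j))"

definition refinement :: "('n \<Rightarrow> nat) \<Rightarrow> (('n \<Rightarrow> bool) \<Rightarrow> ('n \<Rightarrow> bool))
    \<Rightarrow> (('n \<Rightarrow> nat) \<Rightarrow> ('n \<Rightarrow> nat)) \<Rightarrow> bool" where
  "refinement m f h \<longleftrightarrow>
     (\<forall>x\<in>stateX m. h x \<in> stateX m \<and>
        (\<forall>j. \<bar>int (h x j) - int (x j)\<bar> \<le> 1) \<and>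
        (\<forall>j. (h x j < x j \<longrightarrow> (\<exists>x'\<in>alpha m x. \<not> f x' j \<and> x' j)) \<and>
             (h x j > x j \<longrightarrow> (\<exists>x'\<in>alpha m x. f x' j \<and> \<not> x' j))))"

datatype mpval = Zero | One | Inc | Dec

definition stateMP :: "'n set \<Rightarrow> ('n \<Rightarrow> mpval) set" where
  "stateMP J = {x. \<forall>j. j \<notin> J \<longrightarrow> x j \<in> {Zero, One}}"

definition gamma :: "('n \<Rightarrow> mpval) \<Rightarrow> ('n \<Rightarrow> bool) set" where
  "gamma x = {x'. \<forall>j. (x j = Zero \<longrightarrow> \<not> x' j) \<and> (x j = One \<longrightarrow> x' j)}"

definition mp_trans :: "'n set \<Rightarrow> (('n \<Rightarrow> bool) \<Rightarrow> ('n \<Rightarrow> bool))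
    \<Rightarrow> ('n \<Rightarrow> mpval) \<Rightarrow> ('n \<Rightarrow> mpval) \<Rightarrow> bool" where
  "mp_trans J f x y \<longleftrightarrow> x \<in> stateMP J \<and>
     (\<exists>j0. (\<forall>j. j \<noteq> j0 \<longrightarrow> y j = x j) \<and>
        ((x j0 \<in> {Zero, Dec} \<and> (\<exists>x'\<in>gamma x. f x' j0) \<and> y j0 = Inc) \<or>
         (x j0 \<in> {One, Inc} \<and> (\<exists>x'\<in>gamma x. \<not> f x' j0) \<and> y j0 = Dec) \<or>
         (x j0 = Inc \<and> y j0 = One) \<or>
         (x j0 = Dec \<and> y j0 = Zero) \<or>
         (j0 \<notin> J \<and> x j0 = Zero \<and> (\<exists>x'\<in>gamma x. f x' j0) \<and> y j0 = One) \<or>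
         (j0 \<notin> J \<and> x j0 = One \<and> (\<exists>x'\<in>gamma x. \<not> f x' j0) \<and> y j0 = Zero)))"

definition compatible :: "('n \<Rightarrow> nat) \<Rightarrow> ('n \<Rightarrow> nat) \<Rightarrow> ('n \<Rightarrow> mpval) \<Rightarrow> bool" where
  "compatible m x xh \<longleftrightarrow> (\<forall>j.
     (x j = 0 \<longrightarrow> xh j = Zero) \<and> (x j = m j \<longrightarrow> xh j = One) \<and>
     (x j \<notin> {0, m j} \<longrightarrow> xh j \<in> {Inc, Dec}))"

end

theory Submission
  imports Defs
begin

text \<open>Every asynchronous step of \<open>h\<close> moves one component \<open>i\<close> by one unit, and the
  refinement property provides a Boolean state in \<open>\<alpha>(x)\<close> at which \<open>f\<close> permits that
  move. Compatibility gives \<open>\<alpha>(x) \<subseteq> \<gamma>(x\<^sub>h)\<close>, so the same Boolean state lets the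
  most permissive dynamics set component \<open>i\<close> to \<open>Inc\<close> (resp. \<open>Dec\<close>), followed by
  \<open>One\<close> (resp. \<open>Zero\<close>) when the extreme value is reached; for a Boolean component
  (\<open>m i = 1\<close>) the direct rules (e) and (f) are used.\<close>

lemma stateMP_fun_upd:
  "w \<in> stateMP J \<Longrightarrow> (i \<notin> J \<Longrightarrow> v \<in> {Zero, One}) \<Longrightarrow> w(i := v) \<in> stateMP J"
  unfolding stateMP_def by auto

lemma mp_trans_to_Inc:
  "w \<in> stateMP J \<Longrightarrow> w i \<in> {Zero, Dec} \<Longrightarrow> x' \<in> gamma w \<Longrightarrow> f x' i
    \<Longrightarrow> mp_trans J f w (w(i := Inc))"
  unfolding mp_trans_def by (intro conjI exI[of _ i]) auto

lemma mp_trans_to_Dec: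
  "w \<in> stateMP J \<Longrightarrow> w i \<in> {One, Inc} \<Longrightarrow> x' \<in> gamma w \<Longrightarrow> \<not> f x' i
    \<Longrightarrow> mp_trans J f w (w(i := Dec))"
  unfolding mp_trans_def by (intro conjI exI[of _ i]) auto

lemma mp_trans_Inc_to_One:
  "w \<in> stateMP J \<Longrightarrow> w i = Inc \<Longrightarrow> mp_trans J f w (w(i := One))"
  unfolding mp_trans_def by (intro conjI exI[of _ i]) auto

lemma mp_trans_Dec_to_Zero:
  "w \<in> stateMP J \<Longrightarrow> w i = Dec \<Longrightarrow> mp_trans J f w (w(i := Zero))"
  unfolding mp_trans_def by (intro conjI exI[of _ i]) auto

lemma mp_trans_Zero_to_One:
  "w \<in> stateMP J \<Longrightarrow> i \<notin> J \<Longrightarrow> w i = Zero \<Longrightarrow> x' \<in> gamma w \<Longrightarrow> f x' i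
    \<Longrightarrow> mp_trans J f w (w(i := One))"
  unfolding mp_trans_def by (intro conjI exI[of _ i]) auto

lemma mp_trans_One_to_Zero:
  "w \<in> stateMP J \<Longrightarrow> i \<notin> J \<Longrightarrow> w i = One \<Longrightarrow> x' \<in> gamma w \<Longrightarrow> \<not> f x' i
    \<Longrightarrow> mp_trans J f w (w(i := Zero))"
  unfolding mp_trans_def by (intro conjI exI[of _ i]) auto

lemma mp_reaches_Inc:
  assumes "w \<in> stateMP J" "w i \<noteq> One" "x' \<in> gamma w" "f x' i"
  shows "(mp_trans J f)\<^sup>*\<^sup>* w (w(i := Inc))"
proof (cases "w i = Inc")
  case True
  then show ?thesis by (simp add: fun_upd_idem)
next
  case False
  with assms have "mp_trans J f w (w(i := Inc))"
    by (intro mp_trans_to_Inc[of _ _ _ x']) (auto intro: mpval.exhaust)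
  then show ?thesis by blast
qed

lemma mp_reaches_Dec:
  assumes "w \<in> stateMP J" "w i \<noteq> Zero" "x' \<in> gamma w" "\<not> f x' i"
  shows "(mp_trans J f)\<^sup>*\<^sup>* w (w(i := Dec))"
proof (cases "w i = Dec")
  case True
  then show ?thesis by (simp add: fun_upd_idem)
next
  case False
  with assms have "mp_trans J f w (w(i := Dec))"
    by (intro mp_trans_to_Dec[of _ _ _ x']) (auto intro: mpval.exhaust)
  then show ?thesis by blast
qed

lemma compatible_Zero_iff: "compatible m x xh \<Longrightarrow> xh j = Zero \<longleftrightarrow> x j = 0"
  unfolding compatible_def by (metis insertCI insertE mpval.distinct(1,3,5) singletonD)

lemma compatible_One_iff: "compatible m x xh \<Longrightarrow> xh j = One \<longleftrightarrow> x j = m j"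
  unfolding compatible_def by (metis insertCI insertE mpval.distinct(1,7,9) singletonD)

lemma compatible_fun_upd:
  assumes "compatible m x xh"
    and "a = 0 \<longrightarrow> v = Zero" "a = m i \<longrightarrow> v = One" "a \<notin> {0, m i} \<longrightarrow> v \<in> {Inc, Dec}"
  shows "compatible m (x(i := a)) (xh(i := v))"
  using assms unfolding compatible_def by auto

lemma alpha_subset_gamma: "compatible m x xh \<Longrightarrow> alpha m x \<subseteq> gamma xh"
  unfolding alpha_def gamma_def by (auto simp: compatible_Zero_iff compatible_One_iff)

lemma mp_simulates_increase:
  assumes Boolean_outside_J: "i \<notin> J \<Longrightarrow> m i \<le> 1"
    and xh: "xh \<in> stateMP J" "compatible m x xh"
    and below: "x i < m i"
    and x': "x' \<in> gamma xh" "f x' i" "\<not> x' i"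
  shows "\<exists>yh. (mp_trans J f)\<^sup>*\<^sup>* xh yh \<and> compatible m (x(i := x i + 1)) yh \<and> yh \<in> stateMP J"
proof -
  have not_One: "xh i \<noteq> One" using x' unfolding gamma_def by auto
  show ?thesis
  proof (cases "i \<in> J")
    case False
    with xh not_One have "xh i = Zero" unfolding stateMP_def by auto
    with xh below Boolean_outside_J False have "x i = 0" "m i = 1"
      by (auto simp: compatible_Zero_iff)
    with xh x' False \<open>xh i = Zero\<close> show ?thesis
      by (intro exI[of _ "xh(i := One)"])
        (auto intro: mp_trans_Zero_to_One stateMP_fun_upd compatible_fun_upd)
  next
    case True
    have to_Inc: "(mp_trans J f)\<^sup>*\<^sup>* xh (xh(i := Inc))"
      using mp_reaches_Inc[where f = f, OF xh(1) not_One x'(1,2)] .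
    have Inc_state: "xh(i := Inc) \<in> stateMP J"
      using xh(1) True by (intro stateMP_fun_upd) auto
    show ?thesis
    proof (cases "x i + 1 = m i")
      case True
      have "mp_trans J f (xh(i := Inc)) (xh(i := One))"
        using mp_trans_Inc_to_One[OF Inc_state, of i] by simp
      with to_Inc have "(mp_trans J f)\<^sup>*\<^sup>* xh (xh(i := One))" by simp
      with True xh \<open>i \<in> J\<close> show ?thesis
        by (intro exI[of _ "xh(i := One)"]) (auto intro: stateMP_fun_upd compatible_fun_upd)
    next
      case False
      with to_Inc Inc_state xh show ?thesis
        by (intro exI[of _ "xh(i := Inc)"]) (auto intro: compatible_fun_upd)
    qed
  qed
qed

lemma mp_simulates_decrease:
  assumes Boolean_outside_J: "i \<notin> J \<Longrightarrow> m i \<le> 1"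
    and xh: "xh \<in> stateMP J" "compatible m x xh"
    and above: "0 < x i" "x i \<le> m i"
    and x': "x' \<in> gamma xh" "\<not> f x' i" "x' i"
  shows "\<exists>yh. (mp_trans J f)\<^sup>*\<^sup>* xh yh \<and> compatible m (x(i := x i - 1)) yh \<and> yh \<in> stateMP J"
proof -
  have not_Zero: "xh i \<noteq> Zero" using x' unfolding gamma_def by auto
  show ?thesis
  proof (cases "i \<in> J")
    case False
    with xh not_Zero have "xh i = One" unfolding stateMP_def by auto
    with xh above Boolean_outside_J False have "x i = 1" "m i = 1"
      by (auto simp: compatible_One_iff)
    with xh x' False \<open>xh i = One\<close> show ?thesis
      by (intro exI[of _ "xh(i := Zero)"])
        (auto intro: mp_trans_One_to_Zero stateMP_fun_upd compatible_fun_upd)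
  next
    case True
    have to_Dec: "(mp_trans J f)\<^sup>*\<^sup>* xh (xh(i := Dec))"
      using mp_reaches_Dec[where f = f, OF xh(1) not_Zero x'(1,2)] .
    have Dec_state: "xh(i := Dec) \<in> stateMP J"
      using xh(1) True by (intro stateMP_fun_upd) auto
    show ?thesis
    proof (cases "x i = 1")
      case True
      have "mp_trans J f (xh(i := Dec)) (xh(i := Zero))"
        using mp_trans_Dec_to_Zero[OF Dec_state, of i] by simp
      with to_Dec have "(mp_trans J f)\<^sup>*\<^sup>* xh (xh(i := Zero))" by simp
      with True xh above \<open>i \<in> J\<close> show ?thesis
        by (intro exI[of _ "xh(i := Zero)"]) (auto intro: stateMP_fun_upd compatible_fun_upd)
    next
      case False
      with to_Dec Dec_state xh above show ?thesis
        by (intro exI[of _ "xh(i := Dec)"]) (auto intro: compatible_fun_upd)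
    qed
  qed
qed

lemma async_trans_simulated_by_mp:
  assumes Boolean_outside_J: "\<forall>j. j \<notin> J \<longrightarrow> m j \<le> 1"
    and ref: "refinement m f h" and step: "async_trans m h x y"
    and xh: "xh \<in> stateMP J" "compatible m x xh"
  shows "\<exists>yh. (mp_trans J f)\<^sup>*\<^sup>* xh yh \<and> compatible m y yh \<and> yh \<in> stateMP J"
proof -
  from step obtain i where x: "x \<in> stateX m" and moves: "x i \<noteq> h x i"
    and y: "y = x(i := if h x i > x i then x i + 1 else x i - 1)"
    unfolding async_trans_def by fastforce
  from ref x have "h x i \<le> m i" "x i \<le> m i"
    unfolding refinement_def stateX_def by auto
  have alpha_gamma: "alpha m x \<subseteq> gamma xh"
    using xh(2) by (rule alpha_subset_gamma)
  show ?thesis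
  proof (cases "h x i > x i")
    case True
    with ref x alpha_gamma obtain x' where "x' \<in> gamma xh" "f x' i" "\<not> x' i"
      unfolding refinement_def by blast
    with True y \<open>h x i \<le> m i\<close> show ?thesis
      using mp_simulates_increase[OF _ xh] Boolean_outside_J by simp
  next
    case False
    with moves have "h x i < x i" by simp
    with ref x alpha_gamma obtain x' where "x' \<in> gamma xh" "\<not> f x' i" "x' i"
      unfolding refinement_def by blast
    with False \<open>h x i < x i\<close> y \<open>x i \<le> m i\<close> show ?thesis
      using mp_simulates_decrease[OF _ xh] Boolean_outside_J by simp
  qed
qed

lemma async_trajectory_simulated_by_mp:
  assumes "\<forall>j. j \<notin> J \<longrightarrow> m j \<le> 1" "refinement m f h"
    and "(async_trans m h)\<^sup>*\<^sup>* x y" "xh \<in> stateMP J" "compatible m x xh"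
  shows "\<exists>yh. (mp_trans J f)\<^sup>*\<^sup>* xh yh \<and> compatible m y yh \<and> yh \<in> stateMP J"
  using assms(3)
proof (induction rule: rtranclp_induct)
  case base
  then show ?case using assms(4,5) by blast
next
  case (step y z)
  then obtain yh where "(mp_trans J f)\<^sup>*\<^sup>* xh yh" "compatible m y yh" "yh \<in> stateMP J"
    by blast
  moreover obtain zh where "(mp_trans J f)\<^sup>*\<^sup>* yh zh" "compatible m z zh" "zh \<in> stateMP J"
    using async_trans_simulated_by_mp[OF assms(1,2) step.hyps(2) \<open>yh \<in> stateMP J\<close>
        \<open>compatible m y yh\<close>] by blast
  ultimately show ?case by (meson rtranclp_trans)
qed

theorem theorem2:
  fixes f :: "('n::finite \<Rightarrow> bool) \<Rightarrow> ('n \<Rightarrow> bool)"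
    and J :: "'n set"
    and m :: "'n \<Rightarrow> nat"
    and h :: "('n \<Rightarrow> nat) \<Rightarrow> ('n \<Rightarrow> nat)"
    and x y :: "'n \<Rightarrow> nat"
    and xh :: "'n \<Rightarrow> mpval"
  assumes "J \<noteq> {}"
    and "\<forall>j. m j \<ge> 1"
    and "\<forall>j. m j > 1 \<longleftrightarrow> j \<in> J"
    and "refinement m f h"
    and "x \<in> stateX m" and "y \<in> stateX m"
    and "(async_trans m h)\<^sup>*\<^sup>* x y"
    and "xh \<in> stateMP J"
    and "compatible m x xh"
  shows "\<exists>yh. (mp_trans J f)\<^sup>*\<^sup>* xh yh \<and> compatible m y yh"
proof -
  have "\<forall>j. j \<notin> J \<longrightarrow> m j \<le> 1"
    using assms(3) by (meson not_less)
  then show ?thesis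
    using async_trajectory_simulated_by_mp[OF _ assms(4,7,8,9)] by blast
qed

end
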